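(* In the unramified minimax setting below, with $\Sigma_{m,n}=\mathrm{diag}(\varpi_\mathrm{F}^{(m+1)(n-1)},\varpi_\mathrm{F}^{(m+1)(n-2)},\dots,\varpi_\mathrm{F}^{m+1},1)$ and $\mathrm{K}':=\Sigma_{m,n}\mathrm{K}_n(n(m+1))\Sigma_{m,n}^{-1}$, we have: (1) $\mathrm{H}^1\cap\mathrm{K}'=\mathrm{U}^{\lfloor m/2\rfloor+1}\cap\mathrm{K}'$; (2) $(\mathrm{U}_n\cap\mathrm{J}^1)\mathrm{H}^1\cap\mathrm{K}'=(\mathrm{U}_n\cap\mathrm{U}^{\lfloor (m+1)/2\rfloor})\mathrm{U}^{\lfloor m/2\rfloor+1}\cap\mathrm{K}'$; (3) $\mathbf{J}\cap\mathrm{K}'=\mathrm{J}^1\cap\mathrm{K}'$.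
   Context: $\mathrm{F}$ non-archimedean local field, $\mathfrak{o}_\mathrm{F}$, $\mathfrak{p}_\mathrm{F}=\varpi_\mathrm{F}\mathfrak{o}_\mathrm{F}$, residue field $k_\mathrm{F}$; $n\geqslant2$. $\mathrm{K}_n=\mathrm{GL}_n(\mathfrak{o}_\mathrm{F})$, $\mathrm{K}_n(N)=\{\left(\begin{smallmatrix}a&b\\c&d\end{smallmatrix}\right)\in\mathrm{K}_n: c\in\mathrm{M}_{1\times(n-1)}(\mathfrak{p}_\mathrm{F}^N),\ d\in1+\mathfrak{p}_\mathrm{F}^N\}$. $\mathrm{U}_n$: upper unitriangular subgroup of $\mathrm{GL}_n(\mathrm{F})$. Unramified minimax setting: $m\geqslant1$ is an integer, $\mathrm{E}/\mathrm{F}$ an unramified extension of degree $n$ and $\beta\in\mathrm{E}$ with $\mathrm{E}=\mathrm{F}[\beta]$, $\nu_\mathrm{E}(\beta)=-m$, and $\varpi_\mathrm{F}^m\beta+\mathfrak{p}_\mathrm{E}$ generating $k_\mathrm{E}$ over $k_\mathrm{F}$. Let $X^n+a_{n-1}X^{n-1}+\dots+a_0$ be the minimal polynomial of $\beta$. Identify $\mathrm{E}$ with $\mathrm{F}^n$ via the basis $\{\varpi_\mathrm{F}^{km}\beta^k:0\leqslant k\leqslant n-1\}$, so $\mathrm{E}\subset\mathrm{M}_n(\mathrm{F})$, $\mathfrak{o}_\mathrm{E}\subset\mathrm{M}_n(\mathfrak{o}_\mathrm{F})$, $\mathfrak{p}_\mathrm{E}=\varpi_\mathrm{F}\mathfrak{o}_\mathrm{E}$,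 and $$\beta=\begin{pmatrix}&&&-\varpi_\mathrm{F}^{(n-1)m}a_0\\ \varpi_\mathrm{F}^{-m}&&&-\varpi_\mathrm{F}^{(n-2)m}a_1\\ &\ddots&&\vdots\\ &&\varpi_\mathrm{F}^{-m}&-a_{n-1}\end{pmatrix}.$$ For $r\geqslant1$ let $\mathrm{U}^r=1+\mathrm{M}_n(\mathfrak{p}_\mathrm{F}^r)$. Define $\mathrm{H}^1=(1+\mathfrak{p}_\mathrm{E})\mathrm{U}^{\lfloor m/2\rfloor+1}$, $\mathrm{J}^1=(1+\mathfrak{p}_\mathrm{E})\mathrm{U}^{\lfloor (m+1)/2\rfloor}$, and $\mathbf{J}=\mathrm{E}^\times\mathrm{U}^{\lfloor (m+1)/2\rfloor}$. *)

theory Defs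
  imports "Jordan_Normal_Form.Matrix"
begin

text \<open>A normalized discrete valuation on a field, given as a map to the integers on
  nonzero elements (the value at 0 is irrelevant; 0 is treated as having valuation infinity).\<close>
definition discrete_val :: "('a::field \<Rightarrow> int) \<Rightarrow> bool" where
  "discrete_val v \<longleftrightarrow>
     (\<forall>x y. x \<noteq> 0 \<longrightarrow> y \<noteq> 0 \<longrightarrow> v (x * y) = v x + v y) \<and>
     (\<forall>x y. x \<noteq> 0 \<longrightarrow> y \<noteq> 0 \<longrightarrow> x + y \<noteq> 0 \<longrightarrow> min (v x) (v y) \<le> v (x + y)) \<and>
     (\<forall>k. \<exists>x. x \<noteq> 0 \<and> v x = k)"

definition val_ideal :: "('a::field \<Rightarrow> int) \<Rightarrow> int \<Rightarrow> 'a set" where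
  "val_ideal v r = {x. x = 0 \<or> r \<le> v x}"

abbreviation val_ring :: "('a::field \<Rightarrow> int) \<Rightarrow> 'a set" where
  "val_ring v \<equiv> val_ideal v 0"

definition nonarch_local_field :: "('a::field \<Rightarrow> int) \<Rightarrow> bool" where
  "nonarch_local_field v \<longleftrightarrow>
     discrete_val v \<and>
     (\<forall>X :: nat \<Rightarrow> 'a.
        (\<forall>r. \<exists>N. \<forall>i\<ge>N. \<forall>j\<ge>N. X i - X j \<in> val_ideal v r) \<longrightarrow>
        (\<exists>L. \<forall>r. \<exists>N. \<forall>i\<ge>N. X i - L \<in> val_ideal v r)) \<and>
     (\<exists>S. finite S \<and> S \<subseteq> val_ring v \<and>
        (\<forall>x\<in>val_ring v. \<exists>s\<in>S. x - s \<in> val_ideal v 1))"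

definition field_embedding :: "('a::field \<Rightarrow> 'b::field) \<Rightarrow> bool" where
  "field_embedding \<iota> \<longleftrightarrow> \<iota> 1 = 1 \<and> (\<forall>x y. \<iota> (x + y) = \<iota> x + \<iota> y) \<and>
                          (\<forall>x y. \<iota> (x * y) = \<iota> x * \<iota> y)"

text \<open>E (a field type 'b) with valuation w is an unramified extension of F of degree n
  (via the embedding iota), generated by beta with basis 1, beta, ..., beta^(n-1);
  w restricts to v on F (ramification index 1, so w is the normalized valuation of E);
  w beta = -m; and the residue class of varpi^m beta generates k_E over k_F.\<close>
definition unramified_minimax ::
  "('a::field \<Rightarrow> int) \<Rightarrow> 'a \<Rightarrow> ('b::field \<Rightarrow> int) \<Rightarrow> ('a \<Rightarrow> 'b) \<Rightarrow> nat \<Rightarrow> nat \<Rightarrow> 'b \<Rightarrow> bool" where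
  "unramified_minimax v \<omega> w \<iota> n m \<beta> \<longleftrightarrow>
     nonarch_local_field v \<and> \<omega> \<noteq> 0 \<and> v \<omega> = 1 \<and>
     discrete_val w \<and> field_embedding \<iota> \<and> (\<forall>x. x \<noteq> 0 \<longrightarrow> w (\<iota> x) = v x) \<and>
     n \<ge> 2 \<and> m \<ge> 1 \<and>
     (\<forall>y. \<exists>c. y = (\<Sum>k<n. \<iota> (c k) * \<beta> ^ k)) \<and>
     (\<forall>c. (\<Sum>k<n. \<iota> (c k) * \<beta> ^ k) = 0 \<longrightarrow> (\<forall>k<n. c k = 0)) \<and>
     \<beta> \<noteq> 0 \<and> w \<beta> = - int m \<and>
     (\<forall>y\<in>val_ideal w 0. \<exists>(c :: nat \<Rightarrow> 'a) N. (\<forall>k. c k \<in> val_ring v) \<and>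
         y - (\<Sum>k<N. \<iota> (c k) * (\<iota> (\<omega> ^ m) * \<beta>) ^ k) \<in> val_ideal w 1)"

definition E_coords :: "('a::field \<Rightarrow> 'b::field) \<Rightarrow> 'a \<Rightarrow> nat \<Rightarrow> nat \<Rightarrow> 'b \<Rightarrow> 'b \<Rightarrow> nat \<Rightarrow> 'a" where
  "E_coords \<iota> \<omega> n m \<beta> x = (THE c. (\<forall>k\<ge>n. c k = 0) \<and>
        x = (\<Sum>k<n. \<iota> (c k) * \<iota> (\<omega> ^ (k * m)) * \<beta> ^ k))"

definition E_emb :: "('a::field \<Rightarrow> 'b::field) \<Rightarrow> 'a \<Rightarrow> nat \<Rightarrow> nat \<Rightarrow> 'b \<Rightarrow> 'b \<Rightarrow> 'a mat" where
  "E_emb \<iota> \<omega> n m \<beta> x =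
     mat n n (\<lambda>(i, j). E_coords \<iota> \<omega> n m \<beta> (x * \<iota> (\<omega> ^ (j * m)) * \<beta> ^ j) i)"

definition set_mult :: "'a::semiring_0 mat set \<Rightarrow> 'a mat set \<Rightarrow> 'a mat set" where
  "set_mult S T = {A * B | A B. A \<in> S \<and> B \<in> T}"

definition Ucong :: "('a::field \<Rightarrow> int) \<Rightarrow> nat \<Rightarrow> nat \<Rightarrow> 'a mat set" where
  "Ucong v n r = {A \<in> carrier_mat n n.
      \<forall>i<n. \<forall>j<n. (A - 1\<^sub>m n) $$ (i, j) \<in> val_ideal v (int r)}"

definition Uupper :: "nat \<Rightarrow> 'a::field mat set" where
  "Uupper n = {A \<in> carrier_mat n n. \<forall>i<n. A $$ (i, i) = 1 \<and> (\<forall>j<i. A $$ (i, j) = 0)}"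

definition Kmax :: "('a::field \<Rightarrow> int) \<Rightarrow> nat \<Rightarrow> 'a mat set" where
  "Kmax v n = {A \<in> carrier_mat n n. (\<forall>i<n. \<forall>j<n. A $$ (i, j) \<in> val_ring v) \<and>
      (\<exists>B \<in> carrier_mat n n. (\<forall>i<n. \<forall>j<n. B $$ (i, j) \<in> val_ring v) \<and>
         A * B = 1\<^sub>m n \<and> B * A = 1\<^sub>m n)}"

definition Kmirab :: "('a::field \<Rightarrow> int) \<Rightarrow> nat \<Rightarrow> nat \<Rightarrow> 'a mat set" where
  "Kmirab v n N = {A \<in> Kmax v n.
      (\<forall>j<n - 1. A $$ (n - 1, j) \<in> val_ideal v (int N)) \<and>
      A $$ (n - 1, n - 1) - 1 \<in> val_ideal v (int N)}"

definition Sigma_mat :: "'a::field \<Rightarrow> nat \<Rightarrow> nat \<Rightarrow> 'a mat" where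
  "Sigma_mat \<omega> n m = mat n n (\<lambda>(i, j). if i = j then \<omega> ^ ((m + 1) * (n - 1 - i)) else 0)"

definition Sigma_inv :: "'a::field \<Rightarrow> nat \<Rightarrow> nat \<Rightarrow> 'a mat" where
  "Sigma_inv \<omega> n m = mat n n (\<lambda>(i, j). if i = j then inverse (\<omega> ^ ((m + 1) * (n - 1 - i))) else 0)"

definition Kprime :: "('a::field \<Rightarrow> int) \<Rightarrow> 'a \<Rightarrow> nat \<Rightarrow> nat \<Rightarrow> 'a mat set" where
  "Kprime v \<omega> n m = {Sigma_mat \<omega> n m * k * Sigma_inv \<omega> n m | k. k \<in> Kmirab v n (n * (m + 1))}"

definition onepE :: "('b::field \<Rightarrow> int) \<Rightarrow> ('a::field \<Rightarrow> 'b) \<Rightarrow> 'a \<Rightarrow> nat \<Rightarrow> nat \<Rightarrow> 'b \<Rightarrow> 'a mat set" where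
  "onepE w \<iota> \<omega> n m \<beta> = E_emb \<iota> \<omega> n m \<beta> ` {x. x - 1 \<in> val_ideal w 1}"

definition Eunits :: "('a::field \<Rightarrow> 'b::field) \<Rightarrow> 'a \<Rightarrow> nat \<Rightarrow> nat \<Rightarrow> 'b \<Rightarrow> 'a mat set" where
  "Eunits \<iota> \<omega> n m \<beta> = E_emb \<iota> \<omega> n m \<beta> ` {x. x \<noteq> 0}"

definition H1 :: "('a::field \<Rightarrow> int) \<Rightarrow> ('b::field \<Rightarrow> int) \<Rightarrow> ('a \<Rightarrow> 'b) \<Rightarrow> 'a \<Rightarrow> nat \<Rightarrow> nat \<Rightarrow> 'b \<Rightarrow> 'a mat set" where
  "H1 v w \<iota> \<omega> n m \<beta> = set_mult (onepE w \<iota> \<omega> n m \<beta>) (Ucong v n (m div 2 + 1))"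

definition J1 :: "('a::field \<Rightarrow> int) \<Rightarrow> ('b::field \<Rightarrow> int) \<Rightarrow> ('a \<Rightarrow> 'b) \<Rightarrow> 'a \<Rightarrow> nat \<Rightarrow> nat \<Rightarrow> 'b \<Rightarrow> 'a mat set" where
  "J1 v w \<iota> \<omega> n m \<beta> = set_mult (onepE w \<iota> \<omega> n m \<beta>) (Ucong v n ((m + 1) div 2))"

definition Jbold :: "('a::field \<Rightarrow> int) \<Rightarrow> ('a \<Rightarrow> 'b::field) \<Rightarrow> 'a \<Rightarrow> nat \<Rightarrow> nat \<Rightarrow> 'b \<Rightarrow> 'a mat set" where
  "Jbold v \<iota> \<omega> n m \<beta> = set_mult (Eunits \<iota> \<omega> n m \<beta>) (Ucong v n ((m + 1) div 2))"

end

(*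
  Put \<alpha> = \<omega>\<^sup>m \<beta>, a unit of E whose residue class generates k_E. Reducing modulo p_E and then
  approximating successively in the complete field F shows that 1, \<alpha>, ..., \<alpha>\<^sup>n\<^sup>-\<^sup>1 is an
  o_F-basis of o_E, so x lies in p_E^r iff all its coordinates lie in p_F^r. In particular the
  matrix of x has last row of minimal valuation exactly w x, and right multiplication by a
  matrix in U^1 does not change this. Every element of K' has last row congruent to
  (0, ..., 0, 1) modulo p_F^(m+1); so if x u (x in E^x, u in U^q, 1 <= q <= m+1) satisfies
  this congruence modulo p_F^q, then the last row of (x - 1) u lies in p_F^q, whence
  x - 1 is in p_E^q and x u is in U^q. Thus E^x U^q and (1 + p_E) U^q meet the last-row
  congruence group exactly in U^q, which gives (1) and (3); for (2), an upper unitriangular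
  left factor does not change the last row.
*)
theory Submission
  imports Defs
begin

section \<open>Discrete valuations\<close>

lemma zero_mem_val_ideal [simp]: "0 \<in> val_ideal v r"
  by (simp add: val_ideal_def)

lemma val_ideal_iff: "x \<noteq> 0 \<Longrightarrow> x \<in> val_ideal v r \<longleftrightarrow> r \<le> v x"
  by (simp add: val_ideal_def)

lemma mem_val_ideal_val: "x \<in> val_ideal v (v x)"
  by (simp add: val_ideal_def)

lemma val_ideal_mono: "r \<le> s \<Longrightarrow> x \<in> val_ideal v s \<Longrightarrow> x \<in> val_ideal v r"
  by (auto simp: val_ideal_def)

lemma eq_0_if_mem_all_val_ideal: "(\<And>r. x \<in> val_ideal v r) \<Longrightarrow> x = 0"
  using val_ideal_iff[of x v "v x + 1"] by fastforce

lemma index_mult_mat_sum: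
  "A \<in> carrier_mat n k \<Longrightarrow> B \<in> carrier_mat k l \<Longrightarrow> i < n \<Longrightarrow> j < l \<Longrightarrow>
    (A * B) $$ (i, j) = (\<Sum>p<k. A $$ (i, p) * B $$ (p, j))"
  by (simp add: scalar_prod_def lessThan_atLeast0)

locale discrete_valuation =
  fixes v :: "'a::field \<Rightarrow> int"
  assumes discrete_val: "discrete_val v"
begin

lemma val_mult: "x \<noteq> 0 \<Longrightarrow> y \<noteq> 0 \<Longrightarrow> v (x * y) = v x + v y"
  using discrete_val unfolding discrete_val_def by blast

lemma val_one [simp]: "v 1 = 0"
  using val_mult[of 1 1] by simp

lemma val_uminus [simp]: "v (- x) = v x"
proof (cases "x = 0")
  case False
  have "v (-1) = 0"
    using val_mult[of "-1" "-1"] by simp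
  then show ?thesis
    using val_mult[of "-1" x] False by simp
qed simp

lemma val_inverse: "x \<noteq> 0 \<Longrightarrow> v (inverse x) = - v x"
  using val_mult[of x "inverse x"] by simp

lemma val_power: "x \<noteq> 0 \<Longrightarrow> v (x ^ k) = int k * v x"
  by (induction k) (auto simp: val_mult algebra_simps)

lemma ex_val_eq: "\<exists>x. x \<noteq> 0 \<and> v x = k"
  using discrete_val unfolding discrete_val_def by blast

lemma val_ideal_add:
  assumes "x \<in> val_ideal v r" "y \<in> val_ideal v r"
  shows "x + y \<in> val_ideal v r"
proof (cases "x = 0 \<or> y = 0 \<or> x + y = 0")
  case False
  then have "min (v x) (v y) \<le> v (x + y)"
    using discrete_val unfolding discrete_val_def by blast
  with False assms show ?thesis
    by (auto simp: val_ideal_def)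
qed (use assms in \<open>auto simp: val_ideal_def\<close>)

lemma val_ideal_uminus: "x \<in> val_ideal v r \<Longrightarrow> - x \<in> val_ideal v r"
  by (simp add: val_ideal_def)

lemma val_ideal_diff: "x \<in> val_ideal v r \<Longrightarrow> y \<in> val_ideal v r \<Longrightarrow> x - y \<in> val_ideal v r"
  using val_ideal_add[of x r "- y"] val_ideal_uminus[of y r] by simp

lemma val_ideal_mult: "x \<in> val_ideal v r \<Longrightarrow> y \<in> val_ideal v s \<Longrightarrow> x * y \<in> val_ideal v (r + s)"
  by (cases "x = 0 \<or> y = 0") (auto simp: val_ideal_def val_mult)

lemma val_ring_mult: "x \<in> val_ring v \<Longrightarrow> y \<in> val_ideal v s \<Longrightarrow> x * y \<in> val_ideal v s"
  using val_ideal_mult[of x 0 y s] by simp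

lemma mult_val_ring: "x \<in> val_ideal v r \<Longrightarrow> y \<in> val_ring v \<Longrightarrow> x * y \<in> val_ideal v r"
  using val_ideal_mult[of x r y 0] by simp

lemma val_ideal_sum: "(\<And>i. i \<in> A \<Longrightarrow> f i \<in> val_ideal v r) \<Longrightarrow> sum f A \<in> val_ideal v r"
  by (induction A rule: infinite_finite_induct) (auto intro: val_ideal_add)

lemma one_mem_val_ring: "1 \<in> val_ring v"
  by (simp add: val_ideal_def)

lemma one_notin_val_ideal: "0 < r \<Longrightarrow> 1 \<notin> val_ideal v r"
  by (simp add: val_ideal_def)

lemma inverse_mem_val_ideal: "x \<noteq> 0 \<Longrightarrow> inverse x \<in> val_ideal v (- v x)"
  by (simp add: val_ideal_def val_inverse)

lemma power_mem_val_ideal: "x \<noteq> 0 \<Longrightarrow> v x = 1 \<Longrightarrow> x ^ k \<in> val_ideal v (int k)"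
  by (simp add: val_ideal_def val_power)

lemma mult_mat_entry_mem_val_ideal:
  assumes "A \<in> carrier_mat n k" "B \<in> carrier_mat k l" "i < n" "j < l"
    and "\<And>p. p < k \<Longrightarrow> A $$ (i, p) \<in> val_ideal v r"
    and "\<And>p. p < k \<Longrightarrow> B $$ (p, j) \<in> val_ideal v s"
  shows "(A * B) $$ (i, j) \<in> val_ideal v (r + s)"
  using assms by (auto simp: scalar_prod_def intro!: val_ideal_sum val_ideal_mult)

lemma Ucong_entry_mem_val_ring:
  assumes "A \<in> Ucong v n q" "i < n" "j < n"
  shows "A $$ (i, j) \<in> val_ring v"
proof -
  have "(A - 1\<^sub>m n) $$ (i, j) \<in> val_ring v"
    using assms val_ideal_mono[of 0 "int q" _ v]
    by (auto simp del: index_minus_mat index_one_mat simp: Ucong_def)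
  moreover have "1\<^sub>m n $$ (i, j) \<in> val_ring v"
    using assms(2,3) one_mem_val_ring by simp
  ultimately have "(A - 1\<^sub>m n) $$ (i, j) + 1\<^sub>m n $$ (i, j) \<in> val_ring v"
    by (rule val_ideal_add)
  then show ?thesis
    using assms by (simp add: Ucong_def)
qed

text \<open>\<open>A B - 1 = A (B - 1) + (A - 1)\<close>, and \<open>A\<close> is integral.\<close>
lemma Ucong_mult_closed:
  assumes A: "A \<in> Ucong v n q" and B: "B \<in> Ucong v n q"
  shows "A * B \<in> Ucong v n q"
proof -
  have Ac: "A \<in> carrier_mat n n" and Bc: "B \<in> carrier_mat n n"
    using A B by (auto simp: Ucong_def)
  have "(A * B - 1\<^sub>m n) $$ (i, j) \<in> val_ideal v (int q)" if "i < n" "j < n" for i j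
  proof -
    have "A * (B - 1\<^sub>m n) = A * B - A"
      using Ac Bc by (simp add: mult_minus_distrib_mat[of _ n n])
    then have "(A * B - 1\<^sub>m n) $$ (i, j) = (A * (B - 1\<^sub>m n)) $$ (i, j) + (A - 1\<^sub>m n) $$ (i, j)"
      using that Ac Bc by simp
    moreover have "(A * (B - 1\<^sub>m n)) $$ (i, j) \<in> val_ideal v (0 + int q)"
      using that Ac Bc A B Ucong_entry_mem_val_ring[OF A]
      by (intro mult_mat_entry_mem_val_ideal[of A n n "B - 1\<^sub>m n" n])
        (auto simp del: index_minus_mat index_one_mat simp: Ucong_def intro: minus_carrier_mat)
    moreover have "(A - 1\<^sub>m n) $$ (i, j) \<in> val_ideal v (int q)"
      using A that by (simp del: index_minus_mat index_one_mat add: Ucong_def)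
    ultimately show ?thesis
      by (simp add: val_ideal_add)
  qed
  then show ?thesis
    using Ac Bc by (simp add: Ucong_def)
qed

end

lemma Ucong_antimono: "q \<le> q' \<Longrightarrow> Ucong v n q' \<subseteq> Ucong v n q"
  unfolding Ucong_def
  by (auto simp del: index_minus_mat index_one_mat intro: val_ideal_mono[of "int q" "int q'"])

lemma nonarch_local_field_converges:
  assumes "nonarch_local_field v"
    and step: "\<And>i. X (Suc i) - X i \<in> val_ideal v (int i)"
  shows "\<exists>L. \<forall>r. \<forall>\<^sub>F i in sequentially. X i - L \<in> val_ideal v r"
proof -
  interpret discrete_valuation v
    using assms(1) by unfold_locales (simp add: nonarch_local_field_def)
  have tail: "X j - X i \<in> val_ideal v (int i)" if "i \<le> j" for i j
    using that
  proof (induction j rule: dec_induct)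
    case (step j)
    have "X (Suc j) - X i = (X (Suc j) - X j) + (X j - X i)"
      by simp
    then show ?case
      using step.IH assms(2)[of j] val_ideal_mono[of "int i" "int j" _ v] step.hyps
      by (metis of_nat_le_iff val_ideal_add)
  qed simp
  have "\<exists>N. \<forall>i\<ge>N. \<forall>j\<ge>N. X i - X j \<in> val_ideal v r" for r
  proof (intro exI allI impI)
    fix i j assume "nat r \<le> i" "nat r \<le> j"
    then show "X i - X j \<in> val_ideal v r"
      using tail[of i j] tail[of j i] val_ideal_mono[of r "int (min i j)" _ v]
        val_ideal_uminus[of "X j - X i"]
      by (cases "i \<le> j") (auto simp: min_def)
  qed
  then show ?thesis
    using assms(1) unfolding nonarch_local_field_def eventually_sequentially by blast
qed

section \<open>Last-row congruences\<close>

lemma set_multI: "a \<in> S \<Longrightarrow> b \<in> T \<Longrightarrow> a * b \<in> set_mult S T"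
  unfolding set_mult_def by blast

lemma set_multE:
  assumes "h \<in> set_mult S T"
  obtains a b where "h = a * b" "a \<in> S" "b \<in> T"
  using assms unfolding set_mult_def by blast

definition last_row_cong :: "('a::field \<Rightarrow> int) \<Rightarrow> nat \<Rightarrow> nat \<Rightarrow> 'a mat set" where
  "last_row_cong v n q =
     {A \<in> carrier_mat n n. \<forall>j<n. (A - 1\<^sub>m n) $$ (n - 1, j) \<in> val_ideal v (int q)}"

lemma last_row_cong_antimono: "q \<le> q' \<Longrightarrow> last_row_cong v n q' \<subseteq> last_row_cong v n q"
  unfolding last_row_cong_def
  by (auto simp del: index_minus_mat index_one_mat intro: val_ideal_mono[of "int q" "int q'"])

lemma Ucong_subset_last_row_cong: "Ucong v n q \<subseteq> last_row_cong v n q"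
  unfolding Ucong_def last_row_cong_def by (auto simp del: index_minus_mat index_one_mat)

lemma Uupper_last_row:
  assumes "a \<in> Uupper n" "l < n"
  shows "a $$ (n - 1, l) = (if l = n - 1 then 1 else 0)"
  using assms by (auto simp: Uupper_def)

lemma Uupper_mult_last_row:
  assumes a: "a \<in> Uupper n" and b: "b \<in> carrier_mat n n" and j: "j < n"
  shows "(a * b) $$ (n - 1, j) = b $$ (n - 1, j)"
proof -
  have "(a * b) $$ (n - 1, j) = (\<Sum>l<n. a $$ (n - 1, l) * b $$ (l, j))"
    using a b j by (intro index_mult_mat_sum[of a n n]) (simp_all add: Uupper_def)
  also have "\<dots> = (\<Sum>l<n. if l = n - 1 then b $$ (l, j) else 0)"
    using Uupper_last_row[OF a] by (intro sum.cong) auto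
  finally show ?thesis
    using j by simp
qed

lemma Uupper_subset_last_row_cong: "Uupper n \<subseteq> last_row_cong v n q"
  by (auto simp: last_row_cong_def Uupper_last_row Uupper_def[of n])

lemma Uupper_mult_mem_last_row_cong_iff:
  assumes "a \<in> Uupper n" "b \<in> carrier_mat n n"
  shows "a * b \<in> last_row_cong v n q \<longleftrightarrow> b \<in> last_row_cong v n q"
proof -
  have "a * b \<in> carrier_mat n n"
    using assms by (auto simp: Uupper_def)
  moreover have "(a * b - 1\<^sub>m n) $$ (n - 1, j) = (b - 1\<^sub>m n) $$ (n - 1, j)" if "j < n" for j
    using assms that Uupper_mult_last_row[OF assms that] by (auto simp: Uupper_def)
  ultimately show ?thesis
    using assms(2) by (simp add: last_row_cong_def del: index_minus_mat index_one_mat)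
qed

lemma diagonal_conj_entry:
  assumes "K \<in> carrier_mat n n" "i < n" "j < n"
  shows "(mat n n (\<lambda>(i, j). if i = j then a i else 0) * K * mat n n (\<lambda>(i, j). if i = j then b i else 0)) $$ (i, j)
    = a i * K $$ (i, j) * b j"
  using assms
  by (simp add: scalar_prod_def if_distrib[of "\<lambda>x. x * _"] if_distrib[of "\<lambda>x. _ * x"] cong: if_cong)

context discrete_valuation
begin

lemma Kprime_subset_last_row_cong:
  assumes \<omega>: "\<omega> \<noteq> 0" "v \<omega> = 1"
  shows "Kprime v \<omega> n m \<subseteq> last_row_cong v n (m + 1)"
proof
  fix h assume "h \<in> Kprime v \<omega> n m"
  then obtain K where h: "h = Sigma_mat \<omega> n m * K * Sigma_inv \<omega> n m" and K: "K \<in> Kmirab v n (n * (m + 1))"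
    unfolding Kprime_def by blast
  have Kc: "K \<in> carrier_mat n n"
    using K by (simp add: Kmirab_def Kmax_def)
  have "(h - 1\<^sub>m n) $$ (n - 1, j) \<in> val_ideal v (int (m + 1))" if j: "j < n" for j
  proof -
    define e where "e = (m + 1) * (n - 1 - j)"
    have entry: "h $$ (n - 1, j) = K $$ (n - 1, j) * inverse (\<omega> ^ e)"
      using diagonal_conj_entry[OF Kc, of "n - 1" j] j
      unfolding h Sigma_mat_def Sigma_inv_def e_def by simp
    have "m + 1 \<le> n * (m + 1)"
      using j by (cases n) simp_all
    then have le: "int (m + 1) \<le> int (n * (m + 1))"
      by (simp only: of_nat_le_iff)
    show ?thesis
    proof (cases "j = n - 1")
      case True
      then show ?thesis
        using K j entry val_ideal_mono[OF le] by (auto simp: Kmirab_def e_def h)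
    next
      case False
      then have "K $$ (n - 1, j) \<in> val_ideal v (int (n * (m + 1)))"
        using K j by (simp add: Kmirab_def)
      moreover have "inverse (\<omega> ^ e) \<in> val_ideal v (- int e)"
        using inverse_mem_val_ideal[of "\<omega> ^ e"] \<omega> by (simp add: val_power)
      ultimately have "h $$ (n - 1, j) \<in> val_ideal v (int (n * (m + 1)) + - int e)"
        unfolding entry by (rule val_ideal_mult)
      moreover have "int (m + 1) \<le> int (n * (m + 1)) + - int e"
      proof -
        have "(m + 1) * (n - 1 - j + 1) \<le> (m + 1) * n"
          using j by (intro mult_le_mono2) simp
        then have "e + (m + 1) \<le> n * (m + 1)"
          by (simp add: e_def algebra_simps)
        then show ?thesis
          by linarith
      qed
      ultimately show ?thesis
        using j False val_ideal_mono by (simp add: h)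
    qed
  qed
  moreover have "h \<in> carrier_mat n n"
    unfolding h Sigma_mat_def Sigma_inv_def using Kc by (intro mult_carrier_mat) auto
  ultimately show "h \<in> last_row_cong v n (m + 1)"
    by (simp add: last_row_cong_def del: index_minus_mat index_one_mat)
qed

end

section \<open>An integral basis of the ring of integers of \<open>E\<close>\<close>

locale unramified_minimax_setting =
  fixes v :: "'a::field \<Rightarrow> int" and \<omega> :: 'a and w :: "'b::field \<Rightarrow> int"
    and \<iota> :: "'a \<Rightarrow> 'b" and n m :: nat and \<beta> :: 'b
  assumes unramified_minimax: "unramified_minimax v \<omega> w \<iota> n m \<beta>"
begin

lemma local_field: "nonarch_local_field v"
  using unramified_minimax by (simp add: unramified_minimax_def)

sublocale F: discrete_valuation v
  using local_field by unfold_locales (simp add: nonarch_local_field_def)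

sublocale E: discrete_valuation w
  using unramified_minimax by unfold_locales (simp add: unramified_minimax_def)

sublocale \<iota>: field_hom \<iota>
proof -
  have "field_embedding \<iota>"
    using unramified_minimax by (simp add: unramified_minimax_def)
  then show "field_hom \<iota>"
    unfolding field_embedding_def
    by unfold_locales (simp_all, metis add_cancel_right_right)
qed

lemmas [simp] = \<iota>.hom_add \<iota>.hom_mult \<iota>.hom_uminus \<iota>.hom_minus \<iota>.hom_sum

lemma uniformizer: "\<omega> \<noteq> 0" "v \<omega> = 1"
  using unramified_minimax by (simp_all add: unramified_minimax_def)

lemma val_embed: "x \<noteq> 0 \<Longrightarrow> w (\<iota> x) = v x"
  using unramified_minimax by (simp add: unramified_minimax_def)

lemma n_ge_2: "2 \<le> n"
  using unramified_minimax by (simp add: unramified_minimax_def)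

lemma beta: "\<beta> \<noteq> 0" "w \<beta> = - int m"
  using unramified_minimax by (simp_all add: unramified_minimax_def)

lemma beta_comb_eq_0_imp: "(\<Sum>k<n. \<iota> (d k) * \<beta> ^ k) = 0 \<Longrightarrow> j < n \<Longrightarrow> d j = 0"
  using unramified_minimax unfolding unramified_minimax_def by blast

lemma embed_mem_val_ideal_iff [simp]: "\<iota> x \<in> val_ideal w r \<longleftrightarrow> x \<in> val_ideal v r"
  by (cases "x = 0") (simp_all add: val_ideal_def val_embed)

definition \<alpha> :: 'b where "\<alpha> = \<iota> (\<omega> ^ m) * \<beta>"

lemma val_alpha_power: "w (\<alpha> ^ k) = 0"
proof -
  have "w (\<iota> (\<omega> ^ m)) = int m"
    using uniformizer by (simp add: val_embed F.val_power)
  then have "w \<alpha> = 0"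
    using beta uniformizer by (simp add: \<alpha>_def E.val_mult)
  then show ?thesis
    using beta uniformizer by (simp add: \<alpha>_def E.val_power)
qed

lemma alpha_power_mem_val_ring: "\<alpha> ^ k \<in> val_ring w"
  using val_alpha_power by (simp add: val_ideal_def)

lemma basis_eq_alpha_power: "\<iota> (\<omega> ^ (k * m)) * \<beta> ^ k = \<alpha> ^ k"
  unfolding \<alpha>_def power_mult_distrib by (simp add: \<iota>.hom_power mult.commute flip: power_mult)

lemma alpha_comb_eq_beta_comb:
  "(\<Sum>k<N. \<iota> (c k) * \<alpha> ^ k) = (\<Sum>k<N. \<iota> (c k * \<omega> ^ (k * m)) * \<beta> ^ k)"
  by (simp only: basis_eq_alpha_power[symmetric] \<iota>.hom_mult mult.assoc)

lemma alpha_comb_coeffs_unique: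
  assumes "(\<Sum>k<n. \<iota> (c k) * \<alpha> ^ k) = (\<Sum>k<n. \<iota> (c' k) * \<alpha> ^ k)" "j < n"
  shows "c j = c' j"
proof -
  have "(\<Sum>k<n. \<iota> (c k - c' k) * \<alpha> ^ k) = 0"
    using assms(1) by (simp add: algebra_simps sum_subtractf)
  then have "(\<Sum>k<n. \<iota> ((c k - c' k) * \<omega> ^ (k * m)) * \<beta> ^ k) = 0"
    by (simp only: alpha_comb_eq_beta_comb)
  from beta_comb_eq_0_imp[OF this assms(2)] have "(c j - c' j) * \<omega> ^ (j * m) = 0"
    by simp
  then show ?thesis
    using uniformizer by simp
qed

lemma alpha_comb_exists: "\<exists>c. y = (\<Sum>k<n. \<iota> (c k) * \<alpha> ^ k)"
proof -
  obtain c where "y = (\<Sum>k<n. \<iota> (c k) * \<beta> ^ k)"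
    using unramified_minimax unfolding unramified_minimax_def by blast
  also have "\<dots> = (\<Sum>k<n. \<iota> (c k / \<omega> ^ (k * m)) * \<alpha> ^ k)"
    using uniformizer by (simp only: alpha_comb_eq_beta_comb) simp
  finally show ?thesis
    by (intro exI[of _ "\<lambda>k. c k / \<omega> ^ (k * m)"])
qed

lemma alpha_comb_mem_val_ideal:
  "(\<And>k. k < N \<Longrightarrow> c k \<in> val_ideal v r) \<Longrightarrow> (\<Sum>k<N. \<iota> (c k) * \<alpha> ^ k) \<in> val_ideal w r"
  by (auto intro!: E.val_ideal_sum E.mult_val_ring alpha_power_mem_val_ring)

lemma alpha_comb_delta: "j < N \<Longrightarrow> (\<Sum>k<N. \<iota> (if k = j then 1 else 0) * \<alpha> ^ k) = \<alpha> ^ j"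
  by (simp add: if_distrib[of \<iota>] if_distrib[of "\<lambda>x. x * _"] cong: if_cong)

definition residue_span :: "nat \<Rightarrow> 'b set" where
  "residue_span d =
     {y. \<exists>c. (\<forall>k. c k \<in> val_ring v) \<and> y - (\<Sum>k<d. \<iota> (c k) * \<alpha> ^ k) \<in> val_ideal w 1}"

lemma max_ideal_subset_residue_span: "val_ideal w 1 \<subseteq> residue_span d"
  by (auto simp: residue_span_def intro!: exI[of _ "\<lambda>_. 0"])

lemma residue_span_add:
  assumes "y \<in> residue_span d" "z \<in> residue_span d"
  shows "y + z \<in> residue_span d"
proof -
  obtain b c where b: "\<forall>k. b k \<in> val_ring v" "y - (\<Sum>k<d. \<iota> (b k) * \<alpha> ^ k) \<in> val_ideal w 1"
    and c: "\<forall>k. c k \<in> val_ring v" "z - (\<Sum>k<d. \<iota> (c k) * \<alpha> ^ k) \<in> val_ideal w 1"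
    using assms by (auto simp: residue_span_def)
  have "y + z - (\<Sum>k<d. \<iota> (b k + c k) * \<alpha> ^ k) =
      (y - (\<Sum>k<d. \<iota> (b k) * \<alpha> ^ k)) + (z - (\<Sum>k<d. \<iota> (c k) * \<alpha> ^ k))"
    by (simp add: algebra_simps sum.distrib)
  also have "\<dots> \<in> val_ideal w 1"
    using b(2) c(2) by (rule E.val_ideal_add)
  finally show ?thesis
    using b(1) c(1) unfolding residue_span_def
    by (intro CollectI exI[of _ "\<lambda>k. b k + c k"]) (simp add: F.val_ideal_add)
qed

lemma residue_span_scale:
  assumes "x \<in> val_ring v" "y \<in> residue_span d"
  shows "\<iota> x * y \<in> residue_span d"
proof -
  obtain c where c: "\<forall>k. c k \<in> val_ring v" "y - (\<Sum>k<d. \<iota> (c k) * \<alpha> ^ k) \<in> val_ideal w 1"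
    using assms by (auto simp: residue_span_def)
  have "\<iota> x * y - (\<Sum>k<d. \<iota> (x * c k) * \<alpha> ^ k) = \<iota> x * (y - (\<Sum>k<d. \<iota> (c k) * \<alpha> ^ k))"
    by (simp add: algebra_simps sum_distrib_left)
  also have "\<dots> \<in> val_ideal w 1"
    using assms(1) c(2) by (intro E.val_ring_mult) simp_all
  finally show ?thesis
    using assms(1) c(1) unfolding residue_span_def
    by (intro CollectI exI[of _ "\<lambda>k. x * c k"]) (simp add: F.val_ring_mult)
qed

lemma residue_span_diff:
  assumes "y \<in> residue_span d" "z \<in> residue_span d"
  shows "y - z \<in> residue_span d"
  using residue_span_add[OF assms(1) residue_span_scale[OF _ assms(2), of "-1"]]
  by (simp add: val_ideal_def)

lemma zero_mem_residue_span: "0 \<in> residue_span d"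
  using max_ideal_subset_residue_span zero_mem_val_ideal by (rule subsetD)

lemma residue_span_sum: "(\<And>i. i \<in> A \<Longrightarrow> f i \<in> residue_span d) \<Longrightarrow> sum f A \<in> residue_span d"
  by (induction A rule: infinite_finite_induct)
    (auto intro: residue_span_add zero_mem_residue_span)

lemma alpha_power_mem_residue_span: "k < d \<Longrightarrow> \<alpha> ^ k \<in> residue_span d"
  unfolding residue_span_def
  by (intro CollectI exI[of _ "\<lambda>j. if j = k then 1 else 0"])
    (simp add: alpha_comb_delta F.one_mem_val_ring)

lemma residue_span_alpha_mult:
  assumes top: "\<alpha> ^ d \<in> residue_span d" and y: "y \<in> residue_span d"
  shows "\<alpha> * y \<in> residue_span d"
proof -
  obtain c where c: "\<forall>k. c k \<in> val_ring v" "y - (\<Sum>k<d. \<iota> (c k) * \<alpha> ^ k) \<in> val_ideal w 1"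
    using y by (auto simp: residue_span_def)
  have eq: "\<alpha> * y = (\<Sum>k<d. \<iota> (c k) * \<alpha> ^ Suc k) + \<alpha> * (y - (\<Sum>k<d. \<iota> (c k) * \<alpha> ^ k))"
    by (simp add: algebra_simps sum_distrib_left)
  have "\<iota> (c k) * \<alpha> ^ Suc k \<in> residue_span d" if "k < d" for k
    using that top c(1) alpha_power_mem_residue_span[of "Suc k" d]
    by (cases "Suc k = d") (auto intro: residue_span_scale)
  then have "(\<Sum>k<d. \<iota> (c k) * \<alpha> ^ Suc k) \<in> residue_span d"
    by (intro residue_span_sum) simp
  moreover have "\<alpha> * (y - (\<Sum>k<d. \<iota> (c k) * \<alpha> ^ k)) \<in> residue_span d"
    using E.val_ring_mult[OF alpha_power_mem_val_ring[of 1] c(2)] max_ideal_subset_residue_span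
    by (simp add: subset_iff)
  ultimately show ?thesis
    unfolding eq by (rule residue_span_add)
qed

lemma alpha_powers_mem_residue_span:
  assumes top: "\<alpha> ^ d \<in> residue_span d"
  shows "\<alpha> ^ j \<in> residue_span d"
proof (induction j)
  case 0
  then show ?case
    using top alpha_power_mem_residue_span[of 0 d] by (cases d) auto
next
  case (Suc j)
  then show ?case
    using residue_span_alpha_mult[OF top] by simp
qed

text \<open>This is where the residue field of \<open>E\<close> being generated by \<open>\<alpha>\<close> enters.\<close>
lemma val_ring_subset_residue_span:
  assumes top: "\<alpha> ^ d \<in> residue_span d"
  shows "val_ring w \<subseteq> residue_span d"
proof
  fix y assume "y \<in> val_ring w"
  then obtain c N where c: "\<forall>k. c k \<in> val_ring v" "y - (\<Sum>k<N. \<iota> (c k) * \<alpha> ^ k) \<in> val_ideal w 1"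
    using unramified_minimax unfolding unramified_minimax_def \<alpha>_def by blast
  have "(\<Sum>k<N. \<iota> (c k) * \<alpha> ^ k) \<in> residue_span d"
    using c(1) by (intro residue_span_sum residue_span_scale alpha_powers_mem_residue_span[OF top]) auto
  moreover have "y = (\<Sum>k<N. \<iota> (c k) * \<alpha> ^ k) + (y - (\<Sum>k<N. \<iota> (c k) * \<alpha> ^ k))"
    by simp
  moreover have "y - (\<Sum>k<N. \<iota> (c k) * \<alpha> ^ k) \<in> residue_span d"
    using c(2) max_ideal_subset_residue_span by blast
  ultimately show "y \<in> residue_span d"
    using residue_span_add by fastforce
qed

lemma residue_span_approximations:
  assumes span: "val_ring w \<subseteq> residue_span d" and y: "y \<in> val_ring w"
  shows "\<exists>S. \<forall>N. y - (\<Sum>k<d. \<iota> (S N k) * \<alpha> ^ k) \<in> val_ideal w (int N) \<and>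
                (\<forall>k. S (Suc N) k - S N k \<in> val_ideal v (int N))"
proof -
  let ?P = "\<lambda>N c. y - (\<Sum>k<d. \<iota> (c k) * \<alpha> ^ k) \<in> val_ideal w (int N)"
  have start: "\<exists>c. ?P 0 c"
    using y by (intro exI[of _ "\<lambda>_. 0"]) simp
  have step: "\<exists>c'. ?P (Suc N) c' \<and> (\<forall>k. c' k - c k \<in> val_ideal v (int N))" if c: "?P N c" for N c
  proof -
    define z where "z = (y - (\<Sum>k<d. \<iota> (c k) * \<alpha> ^ k)) * inverse (\<iota> (\<omega> ^ N))"
    have "w (\<iota> (\<omega> ^ N)) = int N"
      using uniformizer by (simp add: val_embed F.val_power)
    then have "inverse (\<iota> (\<omega> ^ N)) \<in> val_ideal w (- int N)"
      using E.inverse_mem_val_ideal[of "\<iota> (\<omega> ^ N)"] uniformizer by simp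
    then have "z \<in> val_ideal w (int N + - int N)"
      unfolding z_def by (rule E.val_ideal_mult[OF c])
    then obtain b where b: "\<forall>k. b k \<in> val_ring v" "z - (\<Sum>k<d. \<iota> (b k) * \<alpha> ^ k) \<in> val_ideal w 1"
      using span by (auto simp: residue_span_def)
    have "\<iota> (\<omega> ^ N) * z = y - (\<Sum>k<d. \<iota> (c k) * \<alpha> ^ k)"
      using uniformizer by (simp add: z_def)
    then have "y - (\<Sum>k<d. \<iota> (c k + \<omega> ^ N * b k) * \<alpha> ^ k) =
        \<iota> (\<omega> ^ N) * (z - (\<Sum>k<d. \<iota> (b k) * \<alpha> ^ k))"
      by (simp add: right_diff_distrib distrib_right sum.distrib sum_distrib_left mult.assoc)
    also have "\<dots> \<in> val_ideal w (int N + 1)"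
      using uniformizer b(2) by (intro E.val_ideal_mult) (simp_all add: F.power_mem_val_ideal)
    finally have "?P (Suc N) (\<lambda>k. c k + \<omega> ^ N * b k)"
      by (simp add: add.commute)
    moreover have "\<omega> ^ N * b k \<in> val_ideal v (int N)" for k
      using F.val_ideal_mult[OF F.power_mem_val_ideal[OF uniformizer] b(1)[rule_format, of k]]
      by simp
    ultimately show ?thesis
      by (intro exI[of _ "\<lambda>k. c k + \<omega> ^ N * b k"]) simp
  qed
  show ?thesis
    by (rule dependent_nat_choice[OF start step])
qed

text \<open>Completeness of \<open>F\<close> turns the residue spanning into an exact one.\<close>
lemma residue_span_imp_alpha_comb:
  assumes span: "val_ring w \<subseteq> residue_span d" and y: "y \<in> val_ring w"
  shows "\<exists>c. y = (\<Sum>k<d. \<iota> (c k) * \<alpha> ^ k)"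
proof -
  obtain S where S: "\<And>N. y - (\<Sum>k<d. \<iota> (S N k) * \<alpha> ^ k) \<in> val_ideal w (int N)"
    "\<And>N k. S (Suc N) k - S N k \<in> val_ideal v (int N)"
    using residue_span_approximations[OF assms] by blast
  have "\<exists>L. \<forall>r. \<forall>\<^sub>F N in sequentially. S N k - L \<in> val_ideal v r" for k
    using nonarch_local_field_converges[OF local_field, of "\<lambda>N. S N k"] S(2) by blast
  then obtain L where L: "\<And>k r. \<forall>\<^sub>F N in sequentially. S N k - L k \<in> val_ideal v r"
    by metis
  have "y - (\<Sum>k<d. \<iota> (L k) * \<alpha> ^ k) \<in> val_ideal w r" for r
  proof -
    have "\<forall>\<^sub>F N in sequentially. r \<le> int N \<and> (\<forall>k\<in>{..<d}. S N k - L k \<in> val_ideal v r)"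
      using L by (intro eventually_conj eventually_ball_finite)
        (auto simp: eventually_sequentially intro: exI[of _ "nat r"])
    then obtain N where N: "r \<le> int N" "\<And>k. k < d \<Longrightarrow> S N k - L k \<in> val_ideal v r"
      unfolding eventually_sequentially by auto
    have "y - (\<Sum>k<d. \<iota> (L k) * \<alpha> ^ k) =
        (y - (\<Sum>k<d. \<iota> (S N k) * \<alpha> ^ k)) + (\<Sum>k<d. \<iota> (S N k - L k) * \<alpha> ^ k)"
      by (simp add: algebra_simps sum_subtractf)
    also have "\<dots> \<in> val_ideal w r"
      using N S(1)[of N] val_ideal_mono[OF N(1)]
      by (intro E.val_ideal_add alpha_comb_mem_val_ideal) auto
    finally show ?thesis .
  qed
  then show ?thesis
    using eq_0_if_mem_all_val_ideal by (intro exI[of _ L]) fastforce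
qed

lemma alpha_power_notin_residue_span:
  assumes "d < n"
  shows "\<alpha> ^ d \<notin> residue_span d"
proof
  assume "\<alpha> ^ d \<in> residue_span d"
  then obtain c where "\<alpha> ^ d = (\<Sum>k<d. \<iota> (c k) * \<alpha> ^ k)"
    using residue_span_imp_alpha_comb val_ring_subset_residue_span alpha_power_mem_val_ring
    by blast
  also have "\<dots> = (\<Sum>k<n. \<iota> (if k < d then c k else 0) * \<alpha> ^ k)"
    using assms by (intro sum.mono_neutral_cong_left) auto
  finally have "(\<Sum>k<n. \<iota> (if k = d then 1 else 0) * \<alpha> ^ k) =
      (\<Sum>k<n. \<iota> (if k < d then c k else 0) * \<alpha> ^ k)"
    using alpha_comb_delta[OF assms] by simp
  from alpha_comb_coeffs_unique[OF this assms] show False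
    by simp
qed

lemma alpha_power_mem_residue_span_of_relation:
  assumes d: "d < n" "e d = 1"
    and below: "\<And>k. k < d \<Longrightarrow> e k \<in> val_ring v"
    and above: "\<And>k. d < k \<Longrightarrow> k < n \<Longrightarrow> e k \<in> val_ideal v 1"
    and rel: "(\<Sum>k<n. \<iota> (e k) * \<alpha> ^ k) \<in> val_ideal w 1"
  shows "\<alpha> ^ d \<in> residue_span d"
proof -
  have "\<iota> (e k) * \<alpha> ^ k \<in> residue_span d" if "k < n" "k \<noteq> d" for k
  proof (cases "k < d")
    case True
    then show ?thesis
      using below by (intro residue_span_scale alpha_power_mem_residue_span)
  next
    case False
    with that have "\<iota> (e k) * \<alpha> ^ k \<in> val_ideal w 1"
      using above alpha_power_mem_val_ring by (intro E.mult_val_ring) simp_all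
    then show ?thesis
      using max_ideal_subset_residue_span by blast
  qed
  then have rest: "(\<Sum>k\<in>{..<n} - {d}. \<iota> (e k) * \<alpha> ^ k) \<in> residue_span d"
    by (intro residue_span_sum) auto
  have "(\<Sum>k<n. \<iota> (e k) * \<alpha> ^ k) = \<alpha> ^ d + (\<Sum>k\<in>{..<n} - {d}. \<iota> (e k) * \<alpha> ^ k)"
    using d sum.remove[of "{..<n}" d "\<lambda>k. \<iota> (e k) * \<alpha> ^ k"] by simp
  then show ?thesis
    using residue_span_diff[OF _ rest] rel max_ideal_subset_residue_span by fastforce
qed

text \<open>Divide by the last coefficient that is a unit.\<close>
lemma alpha_comb_unit_coeff_notin_max_ideal:
  assumes c: "\<And>k. k < n \<Longrightarrow> c k \<in> val_ring v" and j: "j < n" "c j \<notin> val_ideal v 1"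
  shows "(\<Sum>k<n. \<iota> (c k) * \<alpha> ^ k) \<notin> val_ideal w 1"
proof
  assume S: "(\<Sum>k<n. \<iota> (c k) * \<alpha> ^ k) \<in> val_ideal w 1"
  define D where "D = {k. k < n \<and> c k \<notin> val_ideal v 1}"
  define d where "d = Max D"
  have "finite D" "j \<in> D"
    using j by (auto simp: D_def)
  then have d: "d < n" "c d \<notin> val_ideal v 1" and above: "\<And>k. d < k \<Longrightarrow> k < n \<Longrightarrow> c k \<in> val_ideal v 1"
    using Max_in[of D] Max_ge[of D] unfolding d_def D_def by fastforce+
  have "c d \<noteq> 0" "v (c d) = 0"
    using d c[of d] by (auto simp: val_ideal_def)
  then have inv: "inverse (c d) \<in> val_ring v"
    using F.inverse_mem_val_ideal by fastforce
  define e where "e k = c k * inverse (c d)" for k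
  have "(\<Sum>k<n. \<iota> (e k) * \<alpha> ^ k) = \<iota> (inverse (c d)) * (\<Sum>k<n. \<iota> (c k) * \<alpha> ^ k)"
    by (simp add: e_def sum_distrib_left mult_ac)
  also have "\<dots> \<in> val_ideal w 1"
    using inv S by (intro E.val_ring_mult) simp_all
  finally have rel: "(\<Sum>k<n. \<iota> (e k) * \<alpha> ^ k) \<in> val_ideal w 1" .
  have "e d = 1"
    using \<open>c d \<noteq> 0\<close> by (simp add: e_def)
  moreover have "e k \<in> val_ring v" if "k < d" for k
    unfolding e_def using c[of k] that d(1) inv by (intro F.mult_val_ring) simp_all
  moreover have "e k \<in> val_ideal v 1" if "d < k" "k < n" for k
    unfolding e_def using above[OF that] inv by (rule F.mult_val_ring)
  ultimately have "\<alpha> ^ d \<in> residue_span d"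
    using d(1) rel by (intro alpha_power_mem_residue_span_of_relation[of d e])
  with alpha_power_notin_residue_span[OF d(1)] show False ..
qed

lemma alpha_comb_coeff_mem_val_ideal:
  assumes S: "(\<Sum>k<n. \<iota> (c k) * \<alpha> ^ k) \<in> val_ideal w r" and j: "j < n"
  shows "c j \<in> val_ideal v r"
proof (rule ccontr)
  assume cj: "c j \<notin> val_ideal v r"
  define Z where "Z = {k. k < n \<and> c k \<noteq> 0}"
  define t where "t = Min ((\<lambda>k. v (c k)) ` Z)"
  have "j \<in> Z"
    using j cj by (auto simp: Z_def)
  have fin: "finite ((\<lambda>k. v (c k)) ` Z)"
    by (simp add: Z_def)
  then have t_le: "\<And>k. k \<in> Z \<Longrightarrow> t \<le> v (c k)"
    unfolding t_def by simp
  have "t \<in> (\<lambda>k. v (c k)) ` Z"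
    unfolding t_def using fin \<open>j \<in> Z\<close> by (intro Min_in) auto
  then obtain k0 where k0: "k0 \<in> Z" "v (c k0) = t"
    by blast
  have "t < r"
    using t_le[OF \<open>j \<in> Z\<close>] cj \<open>j \<in> Z\<close> val_ideal_iff[of "c j" v r] by (simp add: Z_def)
  obtain p where p: "p \<noteq> 0" "v p = - t"
    using F.ex_val_eq by blast
  have "c k * p \<in> val_ring v" if "k < n" for k
  proof (cases "c k = 0")
    case False
    then show ?thesis
      using that t_le[of k] p F.val_mult[of "c k" p] val_ideal_iff[of "c k * p" v 0]
      by (simp add: Z_def)
  qed simp
  moreover have "c k0 * p \<notin> val_ideal v 1"
    using k0 p F.val_mult[of "c k0" p] val_ideal_iff[of "c k0 * p" v 1] by (simp add: Z_def)
  moreover have "k0 < n"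
    using k0 by (simp add: Z_def)
  ultimately have "(\<Sum>k<n. \<iota> (c k * p) * \<alpha> ^ k) \<notin> val_ideal w 1"
    by (intro alpha_comb_unit_coeff_notin_max_ideal)
  moreover have "(\<Sum>k<n. \<iota> (c k * p) * \<alpha> ^ k) = \<iota> p * (\<Sum>k<n. \<iota> (c k) * \<alpha> ^ k)"
    by (simp add: sum_distrib_left mult_ac)
  moreover have "\<iota> p \<in> val_ideal w (- t)"
    using p mem_val_ideal_val[of p v] by simp
  then have "\<iota> p * (\<Sum>k<n. \<iota> (c k) * \<alpha> ^ k) \<in> val_ideal w (- t + r)"
    using S by (rule E.val_ideal_mult)
  ultimately show False
    using val_ideal_mono[of 1 "- t + r"] \<open>t < r\<close> by auto
qed

section \<open>\<open>E\<close> inside the matrix algebra\<close>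

abbreviation coord :: "'b \<Rightarrow> nat \<Rightarrow> 'a" where
  "coord \<equiv> E_coords \<iota> \<omega> n m \<beta>"

abbreviation emb :: "'b \<Rightarrow> 'a mat" where
  "emb \<equiv> E_emb \<iota> \<omega> n m \<beta>"

lemma coord_sum: "x = (\<Sum>k<n. \<iota> (coord x k) * \<alpha> ^ k)"
proof -
  have basis: "(\<Sum>k<n. \<iota> (c k) * \<iota> (\<omega> ^ (k * m)) * \<beta> ^ k) = (\<Sum>k<n. \<iota> (c k) * \<alpha> ^ k)" for c
    by (simp only: mult.assoc basis_eq_alpha_power)
  obtain c where c: "x = (\<Sum>k<n. \<iota> (c k) * \<alpha> ^ k)"
    using alpha_comb_exists by blast
  have "\<exists>!c. (\<forall>k\<ge>n. c k = 0) \<and> x = (\<Sum>k<n. \<iota> (c k) * \<alpha> ^ k)"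
  proof
    show "(\<forall>k\<ge>n. (if k < n then c k else 0) = 0) \<and> x = (\<Sum>k<n. \<iota> (if k < n then c k else 0) * \<alpha> ^ k)"
      using c by simp
  next
    fix c' assume c': "(\<forall>k\<ge>n. c' k = 0) \<and> x = (\<Sum>k<n. \<iota> (c' k) * \<alpha> ^ k)"
    show "c' = (\<lambda>k. if k < n then c k else 0)"
    proof
      fix k
      show "c' k = (if k < n then c k else 0)"
        using c c' alpha_comb_coeffs_unique[of c' c k] by auto
    qed
  qed
  from theI'[OF this] show ?thesis
    unfolding E_coords_def basis by blast
qed

lemma coord_eq: "x = (\<Sum>k<n. \<iota> (c k) * \<alpha> ^ k) \<Longrightarrow> k < n \<Longrightarrow> coord x k = c k"
  using alpha_comb_coeffs_unique[of "coord x" c k] coord_sum[of x] by simp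

lemma coord_mem_val_ideal: "x \<in> val_ideal w r \<Longrightarrow> k < n \<Longrightarrow> coord x k \<in> val_ideal v r"
  using alpha_comb_coeff_mem_val_ideal[of "coord x" r k] coord_sum[of x] by simp

lemma coord_lincomb:
  assumes "finite A" "k < n"
  shows "coord (\<Sum>l\<in>A. \<iota> (a l) * x l) k = (\<Sum>l\<in>A. a l * coord (x l) k)"
proof (rule coord_eq[OF _ assms(2)])
  have "(\<Sum>l\<in>A. \<iota> (a l) * x l) = (\<Sum>l\<in>A. \<Sum>k<n. \<iota> (a l * coord (x l) k) * \<alpha> ^ k)"
    by (subst coord_sum) (simp add: sum_distrib_left mult.assoc)
  also have "\<dots> = (\<Sum>k<n. \<iota> (\<Sum>l\<in>A. a l * coord (x l) k) * \<alpha> ^ k)"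
    by (simp add: sum.swap[of _ A] sum_distrib_right)
  finally show "(\<Sum>l\<in>A. \<iota> (a l) * x l) = \<dots>" .
qed

lemma coord_add: "k < n \<Longrightarrow> coord (x + y) k = coord x k + coord y k"
  using coord_lincomb[of "{0, 1::nat}" k "\<lambda>_. 1" "\<lambda>l. if l = 0 then x else y"] by simp

lemma coord_alpha_power: "j < n \<Longrightarrow> k < n \<Longrightarrow> coord (\<alpha> ^ j) k = (if k = j then 1 else 0)"
  using coord_eq[OF alpha_comb_delta[symmetric]] by simp

lemma E_emb_carrier [simp]: "emb x \<in> carrier_mat n n"
  by (simp add: E_emb_def)

lemma dim_E_emb [simp]: "dim_row (emb x) = n" "dim_col (emb x) = n"
  by (simp_all add: E_emb_def)

lemma index_E_emb: "i < n \<Longrightarrow> j < n \<Longrightarrow> emb x $$ (i, j) = coord (x * \<alpha> ^ j) i"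
  by (simp add: E_emb_def mult.assoc basis_eq_alpha_power)

lemma E_emb_one: "emb 1 = 1\<^sub>m n"
proof (rule eq_matI)
  fix i j assume "i < dim_row (1\<^sub>m n :: 'a mat)" "j < dim_col (1\<^sub>m n :: 'a mat)"
  then show "emb 1 $$ (i, j) = 1\<^sub>m n $$ (i, j)"
    by (simp add: index_E_emb coord_alpha_power)
qed simp_all

lemma E_emb_add: "emb (x + y) = emb x + emb y"
proof (rule eq_matI)
  fix i j assume "i < dim_row (emb x + emb y)" "j < dim_col (emb x + emb y)"
  then have ij: "i < n" "j < n"
    by simp_all
  have "coord ((x + y) * \<alpha> ^ j) i = coord (x * \<alpha> ^ j) i + coord (y * \<alpha> ^ j) i"
    unfolding distrib_right using ij(1) by (rule coord_add)
  then show "emb (x + y) $$ (i, j) = (emb x + emb y) $$ (i, j)"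
    using ij by (simp add: index_E_emb)
qed simp_all

lemma E_emb_mult: "emb (x * y) = emb x * emb y"
proof (rule eq_matI)
  fix i j assume ij: "i < dim_row (emb x * emb y)" "j < dim_col (emb x * emb y)"
  define c where "c = coord (y * \<alpha> ^ j)"
  have "y * \<alpha> ^ j = (\<Sum>l<n. \<iota> (c l) * \<alpha> ^ l)"
    unfolding c_def by (rule coord_sum)
  then have "x * y * \<alpha> ^ j = (\<Sum>l<n. \<iota> (c l) * (x * \<alpha> ^ l))"
    unfolding mult.assoc by (simp add: sum_distrib_left mult.left_commute)
  moreover have "i < n" "j < n"
    using ij by simp_all
  ultimately have "emb (x * y) $$ (i, j) = (\<Sum>l<n. c l * coord (x * \<alpha> ^ l) i)"
    by (simp add: index_E_emb coord_lincomb)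
  also have "\<dots> = (emb x * emb y) $$ (i, j)"
    using \<open>i < n\<close> \<open>j < n\<close>
    by (simp add: c_def index_E_emb scalar_prod_def lessThan_atLeast0 mult.commute)
  finally show "emb (x * y) $$ (i, j) = (emb x * emb y) $$ (i, j)" .
qed simp_all

lemma E_emb_entry_mem_val_ideal:
  assumes "x \<in> val_ideal w r" "i < n" "j < n"
  shows "emb x $$ (i, j) \<in> val_ideal v r"
proof -
  have "x * \<alpha> ^ j \<in> val_ideal w r"
    using assms(1) alpha_power_mem_val_ring by (rule E.mult_val_ring)
  then show ?thesis
    using assms(2,3) by (simp add: index_E_emb coord_mem_val_ideal)
qed

lemma E_emb_mem_Ucong:
  assumes "x - 1 \<in> val_ideal w (int q)"
  shows "emb x \<in> Ucong v n q"
proof -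
  have "emb x = emb (x - 1) + 1\<^sub>m n"
    using E_emb_add[of "x - 1" 1] by (simp add: E_emb_one)
  then have "(emb x - 1\<^sub>m n) $$ (i, j) \<in> val_ideal v (int q)" if "i < n" "j < n" for i j
    using that E_emb_entry_mem_val_ideal[OF assms that] by simp
  then show ?thesis
    unfolding Ucong_def using E_emb_carrier[of x] by blast
qed

section \<open>Elements of \<open>E\<^sup>\<times> U\<^sup>q\<close> with a congruent last row\<close>

text \<open>Write \<open>\<alpha>\<^sup>n\<^sup>-\<^sup>1 = z y\<close> with \<open>y = z\<^sup>-\<^sup>1 \<alpha>\<^sup>n\<^sup>-\<^sup>1\<close> and read off the \<open>(n - 1, 0)\<close> entry of
  \<open>emb z * emb y = emb (\<alpha>\<^sup>n\<^sup>-\<^sup>1)\<close>, which is \<open>1\<close>.\<close>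
lemma E_emb_last_row_not_mem:
  assumes z: "z \<noteq> 0"
  shows "\<exists>j<n. emb z $$ (n - 1, j) \<notin> val_ideal v (w z + 1)"
proof (rule ccontr)
  assume "\<not> ?thesis"
  then have row: "\<And>j. j < n \<Longrightarrow> emb z $$ (n - 1, j) \<in> val_ideal v (w z + 1)"
    by blast
  define y where "y = inverse z * \<alpha> ^ (n - 1)"
  have y: "y \<in> val_ideal w (- w z + 0)"
    unfolding y_def using z alpha_power_mem_val_ring
    by (intro E.val_ideal_mult E.inverse_mem_val_ideal)
  have n: "n - 1 < n" "0 < n"
    using n_ge_2 by simp_all
  have "1 = emb (\<alpha> ^ (n - 1)) $$ (n - 1, 0)"
    using n by (simp add: index_E_emb coord_alpha_power)
  also have "\<alpha> ^ (n - 1) = z * y"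
    using z by (simp add: y_def)
  also have "emb (z * y) $$ (n - 1, 0) \<in> val_ideal v (w z + 1 + (- w z + 0))"
    unfolding E_emb_mult using n row E_emb_entry_mem_val_ideal[OF y]
    by (intro F.mult_mat_entry_mem_val_ideal[of _ n n _ n]) simp_all
  finally show False
    using F.one_notin_val_ideal[of 1] by simp
qed

lemma mem_val_ideal_of_E_emb_mult_last_row:
  assumes u: "u \<in> Ucong v n 1" and row: "\<And>j. j < n \<Longrightarrow> (emb z * u) $$ (n - 1, j) \<in> val_ideal v r"
  shows "z \<in> val_ideal w r"
proof (rule ccontr)
  assume "z \<notin> val_ideal w r"
  then have z: "z \<noteq> 0" "w z + 1 \<le> r"
    by (auto simp: val_ideal_def)
  obtain j where j: "j < n" "emb z $$ (n - 1, j) \<notin> val_ideal v (w z + 1)"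
    using E_emb_last_row_not_mem[OF z(1)] by blast
  have uc: "u \<in> carrier_mat n n"
    using u by (simp add: Ucong_def)
  have "emb z * (u - 1\<^sub>m n) = emb z * u - emb z"
    using uc by (simp add: mult_minus_distrib_mat[of _ n n])
  then have "emb z $$ (n - 1, j) = (emb z * u) $$ (n - 1, j) - (emb z * (u - 1\<^sub>m n)) $$ (n - 1, j)"
    using j uc by simp
  also have "\<dots> \<in> val_ideal v (w z + 1)"
  proof (rule F.val_ideal_diff)
    show "(emb z * u) $$ (n - 1, j) \<in> val_ideal v (w z + 1)"
      using row[OF j(1)] z(2) by (rule val_ideal_mono[rotated])
    show "(emb z * (u - 1\<^sub>m n)) $$ (n - 1, j) \<in> val_ideal v (w z + 1)"
      using j uc u E_emb_entry_mem_val_ideal[OF mem_val_ideal_val[of z w]]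
        minus_carrier_mat[OF one_carrier_mat, of u n]
      by (intro F.mult_mat_entry_mem_val_ideal[of _ n n _ n])
        (auto simp: Ucong_def simp del: index_minus_mat index_one_mat)
  qed
  finally show False
    using j(2) by contradiction
qed

lemma E_emb_mult_last_row_cong_imp:
  assumes u: "u \<in> Ucong v n q" and q: "1 \<le> q" and h: "emb x * u \<in> last_row_cong v n q"
  shows "x - 1 \<in> val_ideal w (int q)"
proof (rule mem_val_ideal_of_E_emb_mult_last_row)
  show "u \<in> Ucong v n 1"
    using u Ucong_antimono[OF q] by blast
  have uc: "u \<in> carrier_mat n n"
    using u by (simp add: Ucong_def)
  have "emb x = emb (x - 1) + 1\<^sub>m n"
    using E_emb_add[of "x - 1" 1] by (simp add: E_emb_one)
  then have split: "emb x * u = emb (x - 1) * u + u"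
    using uc by (simp add: add_mult_distrib_mat[of _ n n])
  fix j assume j: "j < n"
  have "(emb (x - 1) * u) $$ (n - 1, j) = (emb x * u - 1\<^sub>m n) $$ (n - 1, j) - (u - 1\<^sub>m n) $$ (n - 1, j)"
    using j uc by (simp add: split)
  also have "\<dots> \<in> val_ideal v (int q)"
    using h u j by (intro F.val_ideal_diff)
      (auto simp: last_row_cong_def Ucong_def simp del: index_minus_mat index_one_mat)
  finally show "(emb (x - 1) * u) $$ (n - 1, j) \<in> val_ideal v (int q)" .
qed

lemma E_emb_image_mult_Ucong_inter_last_row_cong:
  assumes "1 \<in> X" "1 \<le> q"
  shows "set_mult (emb ` X) (Ucong v n q) \<inter> last_row_cong v n q = Ucong v n q"
proof (intro equalityI subsetI)
  fix h assume "h \<in> set_mult (emb ` X) (Ucong v n q) \<inter> last_row_cong v n q"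
  then obtain x u where h: "h = emb x * u" "u \<in> Ucong v n q" "h \<in> last_row_cong v n q"
    by (auto elim!: set_multE)
  then have "emb x \<in> Ucong v n q"
    using E_emb_mult_last_row_cong_imp assms(2) E_emb_mem_Ucong by blast
  then show "h \<in> Ucong v n q"
    using h F.Ucong_mult_closed by blast
next
  fix u assume u: "u \<in> Ucong v n q"
  then have "u = emb 1 * u"
    by (simp add: E_emb_one Ucong_def left_mult_one_mat[of u n n])
  then have "u \<in> set_mult (emb ` X) (Ucong v n q)"
    using assms(1) u by (metis image_eqI set_multI)
  then show "u \<in> set_mult (emb ` X) (Ucong v n q) \<inter> last_row_cong v n q"
    using u Ucong_subset_last_row_cong by blast
qed

lemma Uupper_mult_E_emb_image_inter_last_row_cong:
  assumes "1 \<in> X" "1 \<in> Y" "1 \<le> r" "1 \<le> s"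
  shows "set_mult (Uupper n \<inter> set_mult (emb ` X) (Ucong v n r)) (set_mult (emb ` Y) (Ucong v n s))
      \<inter> last_row_cong v n s = set_mult (Uupper n \<inter> Ucong v n r) (Ucong v n s)"
    (is "set_mult (_ \<inter> ?J) ?H \<inter> _ = _")
proof (intro equalityI subsetI)
  have carrier: "?H \<subseteq> carrier_mat n n"
    by (auto simp: Ucong_def elim!: set_multE)
  fix h assume h: "h \<in> set_mult (Uupper n \<inter> ?J) ?H \<inter> last_row_cong v n s"
  then obtain a b where ab: "h = a * b" "a \<in> Uupper n \<inter> ?J" "b \<in> ?H"
    by (auto elim: set_multE)
  have "a \<in> Ucong v n r"
    using ab(2) Uupper_subset_last_row_cong E_emb_image_mult_Ucong_inter_last_row_cong[OF assms(1,3)]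
    by blast
  moreover have "b \<in> last_row_cong v n s"
    using h ab Uupper_mult_mem_last_row_cong_iff carrier by blast
  then have "b \<in> Ucong v n s"
    using ab(3) E_emb_image_mult_Ucong_inter_last_row_cong[OF assms(2,4)] by blast
  ultimately show "h \<in> set_mult (Uupper n \<inter> Ucong v n r) (Ucong v n s)"
    using ab by (auto intro: set_multI)
next
  fix h assume "h \<in> set_mult (Uupper n \<inter> Ucong v n r) (Ucong v n s)"
  then obtain a b where h: "h = a * b" "a \<in> Uupper n" "a \<in> Ucong v n r" "b \<in> Ucong v n s"
    by (auto elim!: set_multE)
  have "a \<in> ?J" "b \<in> ?H"
    using h E_emb_image_mult_Ucong_inter_last_row_cong[OF assms(1,3)]
      E_emb_image_mult_Ucong_inter_last_row_cong[OF assms(2,4)] by blast+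
  moreover have "h \<in> last_row_cong v n s"
    using h Uupper_mult_mem_last_row_cong_iff[of a n b v s] Ucong_subset_last_row_cong[of v n s]
    by (auto simp: Ucong_def)
  ultimately show "h \<in> set_mult (Uupper n \<inter> ?J) ?H \<inter> last_row_cong v n s"
    using h by (auto intro: set_multI)
qed

end

theorem lemma6p5:
  fixes v :: "'a::field \<Rightarrow> int" and \<omega> :: 'a
    and w :: "'b::field \<Rightarrow> int" and \<iota> :: "'a \<Rightarrow> 'b" and \<beta> :: 'b
    and n m :: nat
  assumes "unramified_minimax v \<omega> w \<iota> n m \<beta>"
  shows "(H1 v w \<iota> \<omega> n m \<beta> \<inter> Kprime v \<omega> n m = Ucong v n (m div 2 + 1) \<inter> Kprime v \<omega> n m) \<and>
         (set_mult (Uupper n \<inter> J1 v w \<iota> \<omega> n m \<beta>) (H1 v w \<iota> \<omega> n m \<beta>) \<inter> Kprime v \<omega> n m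
         = set_mult (Uupper n \<inter> Ucong v n ((m + 1) div 2)) (Ucong v n (m div 2 + 1)) \<inter> Kprime v \<omega> n m) \<and>
         (Jbold v \<iota> \<omega> n m \<beta> \<inter> Kprime v \<omega> n m = J1 v w \<iota> \<omega> n m \<beta> \<inter> Kprime v \<omega> n m)"
proof -
  interpret unramified_minimax_setting v \<omega> w \<iota> n m \<beta>
    using assms by unfold_locales
  define r s where "r = (m + 1) div 2" and "s = m div 2 + 1"
  have rs: "1 \<le> r" "1 \<le> s"
    using assms by (auto simp: r_def s_def unramified_minimax_def)
  have K: "Kprime v \<omega> n m \<subseteq> last_row_cong v n q" if "q \<le> m + 1" for q
    using F.Kprime_subset_last_row_cong[OF uniformizer] last_row_cong_antimono[OF that] by blast
  have one: "1 \<in> {x. x - 1 \<in> val_ideal w 1}" "(1::'b) \<in> {x. x \<noteq> 0}"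
    by simp_all
  note U_eq = E_emb_image_mult_Ucong_inter_last_row_cong[OF one(1)]
    E_emb_image_mult_Ucong_inter_last_row_cong[OF one(2)]
  have H1: "H1 v w \<iota> \<omega> n m \<beta> \<inter> last_row_cong v n s = Ucong v n s"
    and J1: "J1 v w \<iota> \<omega> n m \<beta> \<inter> last_row_cong v n r = Ucong v n r"
    and Jbold: "Jbold v \<iota> \<omega> n m \<beta> \<inter> last_row_cong v n r = Ucong v n r"
    using U_eq rs by (simp_all add: H1_def J1_def Jbold_def onepE_def Eunits_def r_def s_def)
  have part2: "set_mult (Uupper n \<inter> J1 v w \<iota> \<omega> n m \<beta>) (H1 v w \<iota> \<omega> n m \<beta>) \<inter> last_row_cong v n s
      = set_mult (Uupper n \<inter> Ucong v n r) (Ucong v n s)"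
    using Uupper_mult_E_emb_image_inter_last_row_cong[OF one(1) one(1)] rs
    by (simp add: H1_def J1_def onepE_def r_def s_def)
  show ?thesis
    using H1 J1 Jbold part2 K[of r] K[of s] unfolding r_def s_def by auto
qed

end
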